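(* Let $\gamma$ be a connected braid of $S^1\times\mathbb{D}^2$ with $|n_\gamma|\ge2$. Then every canonical solenoid map associated to $\gamma$ belongs to $\mathcal{U}^{part.hyp}_\gamma$. In particular $\mathcal{U}^{part.hyp}_\gamma$ is non-empty.
   Context: $S^1=\mathbb{R}/\mathbb{Z}$, $\mathbb{D}^2$ the closed unit disk. A connected braid $\gamma$ is (the isotopy class of) an embedding $S^1\to S^1\times\mathbb{D}^2$ transverse to the disks $\{\theta\}\times\mathbb{D}^2$, with $n=n_\gamma\ne0$ the degree of the covering induced by projection to $S^1$. A canonical solenoid map associated to $\gamma$ is built as follows: choose a representative of the braid of the form $t\mapsto(n t, z(t))$, and $\delta>0$ such that for all $t$, $d(z(t),\partial\mathbb{D}^2)>2\delta$, and such that $t_1\ne t_2$, $nt_1=nt_2$ in $S^1$ imply $d(z(t_1),z(t_2))>2\delta$; then $f_{\gamma,\delta}(t,z)=(nt,\delta z+z(t))$. $\mathcal{U}_\gamma$: $C^1$ embeddings $f:S^1\times\mathbb{D}^2\to\mathrm{Int}(S^1\times\mathbb{D}^2)$ with $f(S^1\times\{0\})$ isotopic to $\gamma$. $\mathcal{C}_\alpha(x)=\{(u_1,u_2)\in\mathbb{R}\times\mathbb{R}^2:|u_2|\le\alpha|u_1|\}$. $\mathcal{U}^{part.hyp}_\gamma$: those $f\in\mathcal{U}_\gamma$ with $\alpha>0$, integer $\ell\ge1$, $\lambda>1$ such that $Df^\ell(\mathcal{C}_\alpha(x))\subset\mathcal{C}_\beta(f^\ell(x))$ for some $\beta<\alpha$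 and $|v_1|\ge\lambda|u_1|$ whenever $u\in\mathcal{C}_\alpha(x)$, $Df^\ell u=(v_1,v_2)$. *)

theory Defs
  imports "HOL-Analysis.Analysis"
begin

text \<open>S^1 = R/Z. A point of the solid torus S^1 x D^2 is represented by a
lift (t, z) :: real \<times> complex with cmod z \<le> 1; two lifts represent the same point
iff their first coordinates differ by an integer and the second coordinates agree.
Maps of the solid torus are represented by lifts F : real \<times> complex \<Rightarrow> real \<times> complex
that descend to the quotient. Tangent vectors are (u1, u2) :: real \<times> complex,
i.e. elements of R \<times> R^2 in the natural coordinates of S^1 x D^2.\<close>

definition ST :: "(real \<times> complex) set" where
  "ST = {x. cmod (snd x) \<le> 1}"

definition same_pt :: "real \<times> complex \<Rightarrow> real \<times> complex \<Rightarrow> bool" where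
  "same_pt x y \<longleftrightarrow> fst x - fst y \<in> \<int> \<and> snd x = snd y"

definition descends :: "(real \<times> complex \<Rightarrow> real \<times> complex) \<Rightarrow> bool" where
  "descends F \<longleftrightarrow> (\<forall>x\<in>ST. \<forall>y\<in>ST. same_pt x y \<longrightarrow> same_pt (F x) (F y))"

definition C1_on_ST :: "(real \<times> complex \<Rightarrow> real \<times> complex) \<Rightarrow> bool" where
  "C1_on_ST F \<longleftrightarrow> (\<exists>F' :: real \<times> complex \<Rightarrow> (real \<times> complex) \<Rightarrow>\<^sub>L (real \<times> complex).
      continuous_on ST F' \<and>
      (\<forall>x\<in>ST. (F has_derivative blinfun_apply (F' x)) (at x within ST)))"

definition C1_embedding_into_interior :: "(real \<times> complex \<Rightarrow> real \<times> complex) \<Rightarrow> bool" where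
  "C1_embedding_into_interior F \<longleftrightarrow>
     descends F \<and> C1_on_ST F \<and>
     (\<forall>x\<in>ST. \<forall>D. (F has_derivative D) (at x within ST) \<longrightarrow> inj D) \<and>
     (\<forall>x\<in>ST. \<forall>y\<in>ST. same_pt (F x) (F y) \<longrightarrow> same_pt x y) \<and>
     (\<forall>x\<in>ST. cmod (snd (F x)) < 1)"

text \<open>Lift c : R \<rightarrow> R \<times> C of a C^1 embedding S^1 \<rightarrow> S^1 x D^2 whose S^1-component has degree k.\<close>
definition closed_curve_emb :: "(real \<Rightarrow> real \<times> complex) \<Rightarrow> int \<Rightarrow> bool" where
  "closed_curve_emb c k \<longleftrightarrow>
     (\<exists>c'. continuous_on UNIV c' \<and> (\<forall>t. (c has_vector_derivative c' t) (at t) \<and> c' t \<noteq> 0)) \<and>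
     (\<forall>t. c (t + 1) = c t + (of_int k, 0)) \<and>
     (\<forall>t. c t \<in> ST) \<and>
     (\<forall>s t. same_pt (c s) (c t) \<longrightarrow> s - t \<in> \<int>)"

text \<open>Connected braid: an embedding S^1 \<rightarrow> S^1 x D^2 transverse to the disks {\<theta>} x D^2;
its degree is n_\<gamma> = k.\<close>
definition braid :: "(real \<Rightarrow> real \<times> complex) \<Rightarrow> int \<Rightarrow> bool" where
  "braid c k \<longleftrightarrow> closed_curve_emb c k \<and> k \<noteq> 0 \<and>
     (\<forall>t v. (c has_vector_derivative v) (at t) \<longrightarrow> fst v \<noteq> 0)"

text \<open>C^1 isotopy of (parametrised) embeddings S^1 \<rightarrow> S^1 x D^2; lifts of the end curve
are identified up to deck translations.\<close>
definition curve_isotopic :: "(real \<Rightarrow> real \<times> complex) \<Rightarrow> (real \<Rightarrow> real \<times> complex) \<Rightarrow> bool" where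
  "curve_isotopic c1 c2 \<longleftrightarrow>
     (\<exists>H :: real \<Rightarrow> real \<Rightarrow> real \<times> complex. \<exists>H'. \<exists>k.
        (\<forall>s\<in>{0..1}. closed_curve_emb (H s) k) \<and>
        continuous_on ({0..1} \<times> UNIV) (\<lambda>(s, t). H s t) \<and>
        continuous_on ({0..1} \<times> UNIV) (\<lambda>(s, t). H' s t) \<and>
        (\<forall>s\<in>{0..1}. \<forall>t. (H s has_vector_derivative H' s t) (at t)) \<and>
        H 0 = c1 \<and> (\<exists>m::int. \<forall>t. H 1 t = c2 t + (of_int m, 0)))"

definition in_U :: "(real \<times> complex \<Rightarrow> real \<times> complex) \<Rightarrow> (real \<Rightarrow> real \<times> complex) \<Rightarrow> bool" where
  "in_U F c \<longleftrightarrow> C1_embedding_into_interior F \<and> curve_isotopic (\<lambda>t. F (t, 0)) c"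

definition cone :: "real \<Rightarrow> (real \<times> complex) set" where
  "cone \<alpha> = {u. cmod (snd u) \<le> \<alpha> * \<bar>fst u\<bar>}"

definition in_U_parthyp :: "(real \<times> complex \<Rightarrow> real \<times> complex) \<Rightarrow> (real \<Rightarrow> real \<times> complex) \<Rightarrow> bool" where
  "in_U_parthyp F c \<longleftrightarrow> in_U F c \<and>
     (\<exists>\<alpha>>0. \<exists>l::nat. l \<ge> 1 \<and> (\<exists>lam>1.
        \<forall>x\<in>ST. \<forall>D. ((F ^^ l) has_derivative D) (at x within ST) \<longrightarrow>
          (\<exists>\<beta><\<alpha>. D ` cone \<alpha> \<subseteq> cone \<beta>) \<and>
          (\<forall>u\<in>cone \<alpha>. \<bar>fst (D u)\<bar> \<ge> lam * \<bar>fst u\<bar>)))"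

definition solenoid :: "int \<Rightarrow> (real \<Rightarrow> complex) \<Rightarrow> real \<Rightarrow> real \<times> complex \<Rightarrow> real \<times> complex" where
  "solenoid n zc \<delta> = (\<lambda>(t, z). (of_int n * t, complex_of_real \<delta> * z + zc t))"

end

theory Submission
  imports Defs
begin

text \<open>The derivative of \<open>f(t, z) = (n t, \<delta> z + z(t))\<close> is
\<open>(u\<^sub>1, u\<^sub>2) \<mapsto> (n u\<^sub>1, \<delta> u\<^sub>2 + u\<^sub>1 z'(t))\<close>. It stretches the \<open>S\<^sup>1\<close>-component by \<open>|n| \<ge> 2\<close>,
while the fibre component is contracted by \<open>\<delta> < 1\<close> and sheared by at most \<open>M = sup |z'|\<close>,
which is finite since \<open>z'\<close> is continuous and periodic. Hence already for \<open>l = 1\<close> the cone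
of slope \<open>M + 1\<close> is mapped into the cone of slope \<open>(\<delta> (M + 1) + M) / |n| < M + 1\<close>, with
expansion factor 2. That \<open>f\<close> is an embedding into the interior follows from the choice of
\<open>\<delta>\<close>: the \<open>\<delta>\<close>-disks around the strands of the braid stay inside the open disk and, over
each point of \<open>S\<^sup>1\<close>, are pairwise disjoint.\<close>

lemma has_derivative_within_convex_eq_on_diffs:
  fixes f :: "'a::real_normed_vector \<Rightarrow> 'b::real_normed_vector"
  assumes S: "convex S" and x: "x \<in> S" and y: "y \<in> S"
    and D1: "(f has_derivative D1) (at x within S)"
    and D2: "(f has_derivative D2) (at x within S)"
  shows "D1 (y - x) = D2 (y - x)"
proof -
  define g where "g = (\<lambda>h::real. x + h *\<^sub>R (y - x))"
  have g_segment: "g ` {0..1} \<subseteq> S"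
  proof
    fix p assume "p \<in> g ` {0..1}"
    then obtain h where h: "h \<in> {0..1}" "p = (1 - h) *\<^sub>R x + h *\<^sub>R y"
      by (auto simp: g_def algebra_simps)
    then show "p \<in> S" using S x y convexD_alt by fastforce
  qed
  have g0: "g 0 = x" by (simp add: g_def)
  have g_deriv: "(g has_derivative (\<lambda>h. h *\<^sub>R (y - x))) (at 0 within {0..1})"
    unfolding g_def by (auto intro!: derivative_eq_intros)
  have "((f \<circ> g) has_derivative (D \<circ> (\<lambda>h. h *\<^sub>R (y - x)))) (at 0 within {0..1})"
    if "(f has_derivative D) (at x within S)" for D
    by (rule diff_chain_within[OF g_deriv])
       (use has_derivative_subset[OF that[folded g0] g_segment] in auto)
  from this[OF D1] this[OF D2]
  have "D1 \<circ> (\<lambda>h. h *\<^sub>R (y - x)) = D2 \<circ> (\<lambda>h. h *\<^sub>R (y - x))"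
    using frechet_derivative_unique_within_closed_interval[of 0 1 0 "f \<circ> g"]
    by (simp add: cbox_interval)
  from fun_cong[OF this, of 1] show ?thesis by simp
qed

lemma has_derivative_within_convex_unique:
  fixes f :: "'a::euclidean_space \<Rightarrow> 'b::real_normed_vector"
  assumes "convex S" "interior S \<noteq> {}" "x \<in> S"
    and D1: "(f has_derivative D1) (at x within S)"
    and D2: "(f has_derivative D2) (at x within S)"
  shows "D1 = D2"
proof
  fix u
  have "span ((\<lambda>y. y - x) ` S) = (\<lambda>y. y - x) ` (affine hull S)"
    using diffs_affine_hull_span[OF \<open>x \<in> S\<close>] by simp
  also have "\<dots> = UNIV"
    using affine_hull_nonempty_interior[OF \<open>interior S \<noteq> {}\<close>] surj_plus_right[of "- x"]
    by simp
  finally have "u \<in> span ((\<lambda>y. y - x) ` S)" by simp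
  then show "D1 u = D2 u"
    using has_derivative_within_convex_eq_on_diffs[OF assms(1,3) _ D1 D2]
      has_derivative_linear[OF D1] has_derivative_linear[OF D2]
    by (auto intro: linear_eq_on)
qed

lemma ST_eq: "ST = UNIV \<times> cball 0 1"
  by (auto simp: ST_def)

lemma has_derivative_within_ST_unique:
  fixes f :: "real \<times> complex \<Rightarrow> real \<times> complex"
  assumes "x \<in> ST"
    and "(f has_derivative D1) (at x within ST)"
    and "(f has_derivative D2) (at x within ST)"
  shows "D1 = D2"
proof (rule has_derivative_within_convex_unique[OF _ _ assms])
  show "convex ST" unfolding ST_eq by (intro convex_Times convex_UNIV convex_cball)
  show "interior ST \<noteq> {}" by (simp add: ST_eq interior_Times)
qed

lemma periodic_int_shift:
  assumes "\<And>t. f (t + 1) = f t"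
  shows "f (t + of_int m) = f t"
proof (induction m arbitrary: t rule: int_induct[where k = 0])
  case (step1 i)
  have "f (t + of_int (i + 1)) = f (t + of_int i + 1)" by (simp add: algebra_simps)
  also have "\<dots> = f t" by (simp only: assms step1)
  finally show ?case .
next
  case (step2 i)
  have "f (t + of_int (i - 1)) = f (t + of_int (i - 1) + 1)" by (simp only: assms)
  also have "\<dots> = f (t + of_int i)" by (simp add: algebra_simps)
  also have "\<dots> = f t" by (rule step2)
  finally show ?case .
qed simp

lemma periodic_vector_derivative:
  fixes f :: "real \<Rightarrow> 'a::real_normed_vector"
  assumes periodic: "\<And>t. f (t + 1) = f t"
    and deriv: "\<And>t. (f has_vector_derivative f' t) (at t)"
  shows "f' (t + 1) = f' t"
proof -
  have shift: "((\<lambda>s. s + 1) has_vector_derivative 1) (at t)"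
    by (auto intro!: derivative_eq_intros)
  have "((f \<circ> (\<lambda>s. s + 1)) has_vector_derivative 1 *\<^sub>R f' (t + 1)) (at t)"
    using vector_diff_chain_at[OF shift deriv[of "t + 1"]] .
  moreover have "f \<circ> (\<lambda>s. s + 1) = f" by (simp add: fun_eq_iff periodic)
  ultimately have "(f has_vector_derivative f' (t + 1)) (at t)" by simp
  then show ?thesis using deriv vector_derivative_unique_at by blast
qed

lemma periodic_continuous_bounded:
  fixes g :: "real \<Rightarrow> 'a::real_normed_vector"
  assumes "continuous_on UNIV g" and periodic: "\<And>t. g (t + 1) = g t"
  obtains B where "\<And>t. norm (g t) \<le> B"
proof -
  have "compact (g ` {0..1})"
    by (rule compact_continuous_image) (auto intro: continuous_on_subset[OF assms(1)])
  then obtain B where B: "\<forall>y\<in>g ` {0..1}. norm y \<le> B"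
    using compact_imp_bounded bounded_iff by metis
  have "norm (g t) \<le> B" for t
  proof -
    have "g t = g (frac t)"
      using periodic_int_shift[of g "frac t" "\<lfloor>t\<rfloor>", OF periodic] by (simp add: frac_def)
    moreover have "frac t \<in> {0..1}" using frac_ge_0[of t] frac_lt_1[of t] by simp
    ultimately show ?thesis using B by auto
  qed
  then show thesis by (rule that)
qed

lemma infdist_unit_sphere_le:
  fixes w :: "'a::real_normed_vector"
  assumes "norm w \<le> 1"
  shows "infdist w (sphere 0 1) \<le> 1 - norm w"
proof (cases "w = 0")
  case True
  show ?thesis
  proof (cases "sphere (0::'a) 1 = {}")
    case False
    then obtain p :: 'a where "norm p = 1" by auto
    then show ?thesis using True infdist_le[of p "sphere 0 1" 0] by simp
  qed (use assms in \<open>simp add: infdist_def\<close>)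
next
  case False
  have "infdist w (sphere 0 1) \<le> dist w (sgn w)"
    by (rule infdist_le) (use False in \<open>simp add: norm_sgn\<close>)
  also have "dist w (sgn w) = norm ((norm w - 1) *\<^sub>R sgn w)"
    using False by (simp add: dist_norm sgn_div_norm algebra_simps divide_inverse scaleR_diff_left)
  also have "\<dots> = 1 - norm w" using False assms by (simp add: norm_sgn)
  finally show ?thesis .
qed

definition solenoid_deriv :: "int \<Rightarrow> real \<Rightarrow> complex \<Rightarrow> real \<times> complex \<Rightarrow> real \<times> complex" where
  "solenoid_deriv n \<delta> w = (\<lambda>u. (of_int n * fst u, complex_of_real \<delta> * snd u + fst u *\<^sub>R w))"

lemma solenoid_apply:
  "solenoid n zc \<delta> x = (of_int n * fst x, complex_of_real \<delta> * snd x + zc (fst x))"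
  by (simp add: solenoid_def split_beta)

lemma fst_solenoid_deriv [simp]: "fst (solenoid_deriv n \<delta> w u) = of_int n * fst u"
  by (simp add: solenoid_deriv_def)

lemma has_derivative_solenoid:
  assumes "(zc has_vector_derivative w) (at (fst x))"
  shows "(solenoid n zc \<delta> has_derivative solenoid_deriv n \<delta> w) (at x)"
proof -
  have "((\<lambda>x. zc (fst x)) has_derivative (\<lambda>u. fst u *\<^sub>R w)) (at x)"
    using has_derivative_compose[OF has_derivative_fst[OF has_derivative_ident]
        assms[unfolded has_vector_derivative_def]]
    by simp
  moreover have "solenoid n zc \<delta> = (\<lambda>x. (of_int n * fst x, complex_of_real \<delta> * snd x + zc (fst x)))"
    by (simp add: fun_eq_iff solenoid_apply)
  ultimately show ?thesis
    unfolding solenoid_deriv_def by (auto intro!: derivative_eq_intros)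
qed

lemma bounded_linear_solenoid_deriv: "bounded_linear (solenoid_deriv n \<delta> w)"
proof -
  have "((\<lambda>t. t *\<^sub>R w) has_vector_derivative w) (at (fst (0::real, 0::complex)))"
    by (auto intro!: derivative_eq_intros)
  from has_derivative_bounded_linear[OF has_derivative_solenoid[OF this]] show ?thesis .
qed

lemma inj_solenoid_deriv:
  assumes "n \<noteq> 0" "\<delta> \<noteq> 0"
  shows "inj (solenoid_deriv n \<delta> w)"
proof (rule injI)
  fix u v assume eq: "solenoid_deriv n \<delta> w u = solenoid_deriv n \<delta> w v"
  then have "fst u = fst v" using assms(1) by (simp add: solenoid_deriv_def)
  moreover from eq this have "snd u = snd v" using assms(2) by (simp add: solenoid_deriv_def)
  ultimately show "u = v" by (simp add: prod_eq_iff)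
qed

lemma solenoid_deriv_cone:
  assumes "cmod w \<le> M" "\<delta> \<ge> 0" "n \<noteq> 0"
  shows "solenoid_deriv n \<delta> w ` cone \<alpha> \<subseteq> cone ((\<delta> * \<alpha> + M) / \<bar>of_int n\<bar>)"
proof
  fix v assume "v \<in> solenoid_deriv n \<delta> w ` cone \<alpha>"
  then obtain u where u: "cmod (snd u) \<le> \<alpha> * \<bar>fst u\<bar>" and v: "v = solenoid_deriv n \<delta> w u"
    by (auto simp: cone_def)
  have "cmod (snd v) \<le> \<delta> * cmod (snd u) + \<bar>fst u\<bar> * cmod w"
    using norm_triangle_ineq[of "complex_of_real \<delta> * snd u" "fst u *\<^sub>R w"] assms(2)
    by (simp add: v solenoid_deriv_def norm_mult)
  also have "\<dots> \<le> \<delta> * (\<alpha> * \<bar>fst u\<bar>) + \<bar>fst u\<bar> * M"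
    using u assms(1,2) by (intro add_mono mult_left_mono) auto
  also have "\<dots> = (\<delta> * \<alpha> + M) / \<bar>of_int n\<bar> * \<bar>fst v\<bar>"
    using assms(3) by (simp add: v abs_mult field_simps)
  finally show "v \<in> cone ((\<delta> * \<alpha> + M) / \<bar>of_int n\<bar>)" by (simp add: cone_def)
qed

lemma lipschitz_Blinfun_solenoid_deriv:
  "1-lipschitz_on UNIV (\<lambda>w. Blinfun (solenoid_deriv n \<delta> w))"
proof (rule lipschitz_onI)
  fix w1 w2 :: complex
  have "norm (Blinfun (solenoid_deriv n \<delta> w1) - Blinfun (solenoid_deriv n \<delta> w2)) \<le> cmod (w1 - w2)"
  proof (rule norm_blinfun_bound)
    fix u :: "real \<times> complex"
    have "blinfun_apply (Blinfun (solenoid_deriv n \<delta> w1) - Blinfun (solenoid_deriv n \<delta> w2)) u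
        = (0, fst u *\<^sub>R (w1 - w2))"
      by (simp add: blinfun.diff_left bounded_linear_Blinfun_apply[OF bounded_linear_solenoid_deriv])
         (simp add: solenoid_deriv_def algebra_simps)
    moreover have "norm ((0::real), fst u *\<^sub>R (w1 - w2)) \<le> cmod (w1 - w2) * norm u"
      using norm_fst_le[of "fst u" "snd u"] by (simp add: norm_Pair mult.commute mult_right_mono)
    ultimately show "norm (blinfun_apply
        (Blinfun (solenoid_deriv n \<delta> w1) - Blinfun (solenoid_deriv n \<delta> w2)) u) \<le> cmod (w1 - w2) * norm u"
      by simp
  qed simp
  then show "dist (Blinfun (solenoid_deriv n \<delta> w1)) (Blinfun (solenoid_deriv n \<delta> w2)) \<le> 1 * dist w1 w2"
    by (simp add: dist_norm)
qed simp

lemma solenoid_descends: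
  assumes "\<And>t. zc (t + 1) = zc t"
  shows "descends (solenoid n zc \<delta>)"
  unfolding descends_def
proof (intro ballI impI)
  fix x y assume "same_pt x y"
  then obtain m where "fst x - fst y = of_int m" "snd x = snd y"
    by (auto simp: same_pt_def elim!: Ints_cases)
  then have "fst x = fst y + of_int m" "snd x = snd y" by simp_all
  then show "same_pt (solenoid n zc \<delta> x) (solenoid n zc \<delta> y)"
    by (simp add: same_pt_def solenoid_apply periodic_int_shift[of zc, OF assms]
        flip: right_diff_distrib)
qed

lemma solenoid_same_pt_imp_same_pt:
  assumes periodic: "\<And>t. zc (t + 1) = zc t" and "\<delta> > 0"
    and separated: "\<And>t1 t2. t1 - t2 \<notin> \<int> \<Longrightarrow> of_int n * t1 - of_int n * t2 \<in> \<int> \<Longrightarrow>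
           dist (zc t1) (zc t2) > 2 * \<delta>"
    and "x \<in> ST" "y \<in> ST" "same_pt (solenoid n zc \<delta> x) (solenoid n zc \<delta> y)"
  shows "same_pt x y"
proof -
  obtain t1 z1 t2 z2 where xy: "x = (t1, z1)" "y = (t2, z2)" by (cases x, cases y)
  have z: "cmod z1 \<le> 1" "cmod z2 \<le> 1" using assms(4,5) xy by (auto simp: ST_def)
  have base: "of_int n * t1 - of_int n * t2 \<in> \<int>"
    and fibre: "complex_of_real \<delta> * z1 + zc t1 = complex_of_real \<delta> * z2 + zc t2"
    using assms(6) by (auto simp: same_pt_def solenoid_apply xy)
  show ?thesis
  proof (cases "t1 - t2 \<in> \<int>")
    case True
    then obtain m where "t1 - t2 = of_int m" by (auto elim!: Ints_cases)
    then have "t1 = t2 + of_int m" by simp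
    then have "zc t1 = zc t2" by (simp add: periodic_int_shift[of zc, OF periodic])
    with fibre \<open>\<delta> > 0\<close> have "z1 = z2" by simp
    with True show ?thesis by (simp add: same_pt_def xy)
  next
    case False
    have "zc t1 - zc t2 = complex_of_real \<delta> * (z2 - z1)"
      using fibre by (simp add: algebra_simps)
    then have "dist (zc t1) (zc t2) = \<delta> * cmod (z2 - z1)"
      using \<open>\<delta> > 0\<close> by (simp add: dist_norm norm_mult)
    also have "\<dots> \<le> \<delta> * 2"
      using norm_triangle_ineq4[of z2 z1] z \<open>\<delta> > 0\<close> by (intro mult_left_mono) auto
    finally show ?thesis using separated[OF False base] by simp
  qed
qed

lemma solenoid_into_interior:
  assumes "\<delta> \<ge> 0" "\<And>t. \<delta> + cmod (zc t) < 1" "x \<in> ST"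
  shows "cmod (snd (solenoid n zc \<delta> x)) < 1"
proof -
  have "cmod (snd (solenoid n zc \<delta> x)) \<le> \<delta> * cmod (snd x) + cmod (zc (fst x))"
    using norm_triangle_ineq[of "complex_of_real \<delta> * snd x" "zc (fst x)"] assms(1)
    by (simp add: solenoid_apply norm_mult)
  also have "\<delta> * cmod (snd x) \<le> \<delta>"
    using assms(1,3) by (simp add: ST_def mult_left_le)
  finally show ?thesis using assms(2)[of "fst x"] by simp
qed

lemma C1_on_ST_solenoid:
  assumes deriv: "\<And>t. (zc has_vector_derivative zd t) (at t)" and "continuous_on UNIV zd"
  shows "C1_on_ST (solenoid n zc \<delta>)"
  unfolding C1_on_ST_def
proof (intro exI conjI ballI)
  show "continuous_on ST (\<lambda>x. Blinfun (solenoid_deriv n \<delta> (zd (fst x))))"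
    using lipschitz_on_continuous_on[OF lipschitz_Blinfun_solenoid_deriv] assms(2)
    by (auto intro!: continuous_on_compose2[of UNIV _ _ "\<lambda>x. zd (fst x)"]
        continuous_on_compose2[OF assms(2)] continuous_intros)
  fix x
  show "(solenoid n zc \<delta> has_derivative blinfun_apply (Blinfun (solenoid_deriv n \<delta> (zd (fst x)))))
      (at x within ST)"
    by (simp add: bounded_linear_Blinfun_apply[OF bounded_linear_solenoid_deriv]
        has_derivative_at_withinI[OF has_derivative_solenoid[OF deriv]])
qed

lemma solenoid_C1_embedding_into_interior:
  assumes periodic: "\<And>t. zc (t + 1) = zc t"
    and deriv: "\<And>t. (zc has_vector_derivative zd t) (at t)" and "continuous_on UNIV zd"
    and "n \<noteq> 0" "\<delta> > 0" "\<And>t. \<delta> + cmod (zc t) < 1"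
    and "\<And>t1 t2. t1 - t2 \<notin> \<int> \<Longrightarrow> of_int n * t1 - of_int n * t2 \<in> \<int> \<Longrightarrow>
           dist (zc t1) (zc t2) > 2 * \<delta>"
  shows "C1_embedding_into_interior (solenoid n zc \<delta>)"
proof -
  have "inj D" if "x \<in> ST" "(solenoid n zc \<delta> has_derivative D) (at x within ST)" for x D
  proof -
    have "D = solenoid_deriv n \<delta> (zd (fst x))"
      using has_derivative_within_ST_unique[OF that has_derivative_at_withinI[OF
            has_derivative_solenoid[OF deriv]]] .
    then show ?thesis using inj_solenoid_deriv assms(4,5) by simp
  qed
  then show ?thesis
    unfolding C1_embedding_into_interior_def
    using solenoid_descends[of zc, OF periodic] C1_on_ST_solenoid[OF deriv assms(3)]
      solenoid_same_pt_imp_same_pt[of zc, OF periodic assms(5,7)] solenoid_into_interior assms(5,6)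
    by auto
qed

lemma solenoid_cone_condition:
  assumes deriv: "\<And>t. (zc has_vector_derivative zd t) (at t)"
    and bound: "\<And>t. cmod (zd t) \<le> M"
    and "\<bar>n\<bar> \<ge> 2" "0 \<le> \<delta>" "\<delta> < 1"
  shows "\<exists>\<alpha>>0. \<exists>l::nat. l \<ge> 1 \<and> (\<exists>lam>1.
           \<forall>x\<in>ST. \<forall>D. ((solenoid n zc \<delta> ^^ l) has_derivative D) (at x within ST) \<longrightarrow>
             (\<exists>\<beta><\<alpha>. D ` cone \<alpha> \<subseteq> cone \<beta>) \<and>
             (\<forall>u\<in>cone \<alpha>. \<bar>fst (D u)\<bar> \<ge> lam * \<bar>fst u\<bar>))"
proof -
  have "M \<ge> 0" using bound[of 0] norm_ge_zero order_trans by blast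
  have n: "\<bar>of_int n :: real\<bar> \<ge> 2" using assms(3) by linarith
  have "n \<noteq> 0" using assms(3) by auto
  have "\<delta> * (M + 1) < M + 1"
    using mult_strict_right_mono[of \<delta> 1 "M + 1"] \<open>\<delta> < 1\<close> \<open>M \<ge> 0\<close> by simp
  moreover have "2 * (M + 1) \<le> \<bar>of_int n\<bar> * (M + 1)"
    using n \<open>M \<ge> 0\<close> by (intro mult_right_mono) simp_all
  ultimately have thinner: "(\<delta> * (M + 1) + M) / \<bar>of_int n\<bar> < M + 1"
    using n by (simp add: pos_divide_less_eq mult.commute)
  have "(\<exists>\<beta><M + 1. D ` cone (M + 1) \<subseteq> cone \<beta>) \<and>
      (\<forall>u\<in>cone (M + 1). \<bar>fst (D u)\<bar> \<ge> 2 * \<bar>fst u\<bar>)"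
    if "x \<in> ST" "((solenoid n zc \<delta> ^^ 1) has_derivative D) (at x within ST)" for x D
  proof -
    have "(solenoid n zc \<delta> has_derivative D) (at x within ST)" using that(2) by simp
    then have D: "D = solenoid_deriv n \<delta> (zd (fst x))"
      using has_derivative_within_ST_unique[OF \<open>x \<in> ST\<close> _ has_derivative_at_withinI[OF
          has_derivative_solenoid[OF deriv]]] by blast
    show ?thesis
      using solenoid_deriv_cone[OF bound \<open>0 \<le> \<delta>\<close> \<open>n \<noteq> 0\<close>, of "fst x" "M + 1"] thinner n
      by (auto simp: D abs_mult mult_right_mono)
  qed
  then show ?thesis
    using \<open>M \<ge> 0\<close> by (intro exI[of _ "M + 1"] conjI exI[of _ "1::nat"] exI[of _ "2::real"]) auto
qed

lemma solenoid_in_U_parthyp: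
  assumes "curve_isotopic (\<lambda>t. (of_int n * t, zc t)) c"
    and periodic: "\<And>t. zc (t + 1) = zc t"
    and deriv: "\<And>t. (zc has_vector_derivative zd t) (at t)" and "continuous_on UNIV zd"
    and "\<And>t. cmod (zd t) \<le> M"
    and "\<bar>n\<bar> \<ge> 2" "\<delta> > 0" "\<And>t. \<delta> + cmod (zc t) < 1"
    and "\<And>t1 t2. t1 - t2 \<notin> \<int> \<Longrightarrow> of_int n * t1 - of_int n * t2 \<in> \<int> \<Longrightarrow>
           dist (zc t1) (zc t2) > 2 * \<delta>"
  shows "in_U_parthyp (solenoid n zc \<delta>) c"
proof -
  have "\<delta> < 1" using assms(8)[of 0] by (smt (verit) norm_ge_zero)
  moreover have "n \<noteq> 0" using assms(6) by auto
  moreover have "(\<lambda>t. solenoid n zc \<delta> (t, 0)) = (\<lambda>t. (of_int n * t, zc t))"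
    by (simp add: solenoid_apply)
  ultimately show ?thesis
    unfolding in_U_parthyp_def in_U_def
    using solenoid_C1_embedding_into_interior[OF periodic deriv assms(4) _ assms(7,8,9)]
      solenoid_cone_condition[OF deriv assms(5,6)] assms(1,7)
    by auto
qed

lemma braid_graph_vertical_derivative:
  assumes "braid (\<lambda>t. (of_int n * t, zc t)) n"
  obtains zd where "continuous_on UNIV zd" "\<And>t. (zc has_vector_derivative zd t) (at t)"
    and "\<And>t. zc (t + 1) = zc t" "\<And>t. cmod (zc t) \<le> 1"
proof -
  from assms obtain c' where "continuous_on UNIV c'"
    and c': "\<And>t. ((\<lambda>t. (of_int n * t, zc t)) has_vector_derivative c' t) (at t)"
    and "\<And>t. zc (t + 1) = zc t" "\<And>t. cmod (zc t) \<le> 1"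
    unfolding braid_def closed_curve_emb_def ST_def by auto
  moreover have "(zc has_vector_derivative snd (c' t)) (at t)" for t
    using has_derivative_snd[OF c'[of t, unfolded has_vector_derivative_def]]
    by (simp add: has_vector_derivative_def)
  ultimately show thesis using that continuous_on_snd by blast
qed

theorem mainTheorem10:
  fixes c :: "real \<Rightarrow> real \<times> complex" and n :: int
    and zc :: "real \<Rightarrow> complex" and \<delta> :: real
  assumes "braid c n"
    and "\<bar>n\<bar> \<ge> 2"
    and "braid (\<lambda>t. (of_int n * t, zc t)) n"
    and "curve_isotopic (\<lambda>t. (of_int n * t, zc t)) c"
    and "\<delta> > 0"
    and "\<forall>t. infdist (zc t) (sphere 0 1) > 2 * \<delta>"
    and "\<forall>t1 t2. t1 - t2 \<notin> \<int> \<and> of_int n * t1 - of_int n * t2 \<in> \<int> \<longrightarrow>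
           dist (zc t1) (zc t2) > 2 * \<delta>"
  shows "in_U_parthyp (solenoid n zc \<delta>) c \<and> (\<exists>F. in_U_parthyp F c)"
proof -
  obtain zd where zd: "continuous_on UNIV zd" "\<And>t. (zc has_vector_derivative zd t) (at t)"
    and periodic: "\<And>t. zc (t + 1) = zc t" and disk: "\<And>t. cmod (zc t) \<le> 1"
    using braid_graph_vertical_derivative[OF assms(3)] by blast
  obtain M where "\<And>t. cmod (zd t) \<le> M"
    using periodic_continuous_bounded[OF zd(1) periodic_vector_derivative[OF periodic zd(2)]] by blast
  moreover have "\<delta> + cmod (zc t) < 1" for t
    using less_le_trans[OF spec[OF assms(6)] infdist_unit_sphere_le[OF disk[of t]]] assms(5) by linarith
  ultimately have "in_U_parthyp (solenoid n zc \<delta>) c"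
    using solenoid_in_U_parthyp[OF assms(4) periodic zd(2,1) _ assms(2,5)] assms(7) by blast
  then show ?thesis by blast
qed

end
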